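(* Let $N_x,N_y\ge3$, $\Delta x,\Delta y>0$, $\ell>0$. Consider the grid points $(i,j)$, $1\le i\le N_x$, $1\le j\le N_y$, with neighbor relation $(i,j)\sim(i',j')$ iff $|i-i'|+|j-j'|=1$; let $I$ be the set of interior points ($1<i<N_x$, $1<j<N_y$), $B_c$ the four corner points, and $B$ the remaining (non-corner) boundary points. Let positive numbers $D_{\frac{i+i'}{2},\frac{j+j'}{2}}>0$ be given for every neighboring pair, and numbers $\sigma_{i,j}\ge0$ for every grid point. With the index map $\mathcal I(i,j)=(i-1)N_y+j$, define the $N_xN_y\times N_xN_y$ matrix $\mathbf L$ by (writing $w_2(i,j;i',j')=|i-i'|\Delta x^2+|j-j'|\Delta y^2$ and $w_1(i,j;i',j')=|i-i'|\Delta x+|j-j'|\Delta y$, and $D'=D_{\frac{i+i'}{2},\frac{j+j'}{2}}$, $\tilde D=D_{\frac{i+\tilde i}{2},\frac{j+\tilde j}{2}}$): \begin{itemize} \item for $(i,j)\in I$: $\mathbf L_{\mathcal I(i,j),\mathcal I(i,j)}=\sum_{(\tilde i,\tilde j)\sim(i,j)}\tilde D/w_2(i,j;\tilde i,\tilde j)+\sigma_{i,j}$ and $\mathbf L_{\mathcal I(i,j),\mathcal I(i',j')}=-D'/w_2(i,j;i',j')$ for $(i',j')\sim(i,j)$; \item for $(i,j)\in B$: $\mathbf L_{\mathcal I(i,j),\mathcal I(i,j)}=1+\ell\sum_{(\tilde i,\tilde j)\in I,\,(\tilde i,\tilde j)\sim(i,j)}\tilde D/w_1(i,j;\tilde i,\tilde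 j)$ and $\mathbf L_{\mathcal I(i,j),\mathcal I(i',j')}=-\ell D'/w_1(i,j;i',j')$ for $(i',j')\in I$, $(i',j')\sim(i,j)$; \item for $(i,j)\in B_c$: $\mathbf L_{\mathcal I(i,j),\mathcal I(i,j)}=1+\frac{\sqrt2\ell}{2}\sum_{(\tilde i,\tilde j)\sim(i,j)}\tilde D/w_1(i,j;\tilde i,\tilde j)$ and $\mathbf L_{\mathcal I(i,j),\mathcal I(i',j')}=-\frac{\sqrt2\ell}{2}D'/w_1(i,j;i',j')$ for $(i',j')\sim(i,j)$; \item all other entries are $0$. \end{itemize} Then $\mathbf L$ is a weakly chained diagonally dominant (WCDD) matrix.
   Context: $\mathbf L$ is the staggered-grid finite difference matrix discretizing $-\nabla\cdot D\nabla u+\sigma_a u$ on $[x_1,x_{N_x}]\times[y_1,y_{N_y}]$ with the Robin condition $u+\ell\nu\cdot D\nabla u$ on the boundary (isotropic $D$ evaluated at edge midpoints). For a square matrix $A=(A_{kl})$, row $k$ is weakly diagonally dominant (WDD) if $|A_{kk}|\ge\sum_{l\ne k}|A_{kl}|$ and strictly diagonally dominant (SDD) if the inequality is strict; $A$ is WDD if all rows are WDD. $A$ is weakly chained diagonally dominant (WCDD) if $A$ is WDD and for each row $k$ that is not SDD there exist indices $k_1,\dots,k_p$ and $l$ such that $A_{kk_1},A_{k_1k_2},\dots,A_{k_{p-1}k_p},A_{k_pl}$ are all nonzero and row $l$ is SDD. *)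

theory Defs
  imports Complex_Main
begin

definition row_WDD :: "(nat \<Rightarrow> nat \<Rightarrow> real) \<Rightarrow> nat set \<Rightarrow> nat \<Rightarrow> bool" where
  "row_WDD A S k \<longleftrightarrow> \<bar>A k k\<bar> \<ge> (\<Sum>l\<in>S - {k}. \<bar>A k l\<bar>)"

definition row_SDD :: "(nat \<Rightarrow> nat \<Rightarrow> real) \<Rightarrow> nat set \<Rightarrow> nat \<Rightarrow> bool" where
  "row_SDD A S k \<longleftrightarrow> \<bar>A k k\<bar> > (\<Sum>l\<in>S - {k}. \<bar>A k l\<bar>)"

definition WDD :: "(nat \<Rightarrow> nat \<Rightarrow> real) \<Rightarrow> nat set \<Rightarrow> bool" where
  "WDD A S \<longleftrightarrow> (\<forall>k\<in>S. row_WDD A S k)"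

definition WCDD :: "(nat \<Rightarrow> nat \<Rightarrow> real) \<Rightarrow> nat set \<Rightarrow> bool" where
  "WCDD A S \<longleftrightarrow> WDD A S \<and>
     (\<forall>k\<in>S. \<not> row_SDD A S k \<longrightarrow>
        (\<exists>ps :: nat list. length ps \<ge> 2 \<and> hd ps = k \<and> set ps \<subseteq> S \<and>
           (\<forall>i. i + 1 < length ps \<longrightarrow> A (ps ! i) (ps ! (i + 1)) \<noteq> 0) \<and>
           row_SDD A S (last ps)))"

definition grid :: "nat \<Rightarrow> nat \<Rightarrow> (nat \<times> nat) set" where
  "grid Nx Ny = {1..Nx} \<times> {1..Ny}"

definition nbr :: "nat \<times> nat \<Rightarrow> nat \<times> nat \<Rightarrow> bool" where
  "nbr p q \<longleftrightarrow> \<bar>int (fst p) - int (fst q)\<bar> + \<bar>int (snd p) - int (snd q)\<bar> = 1"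

definition interior :: "nat \<Rightarrow> nat \<Rightarrow> (nat \<times> nat) set" where
  "interior Nx Ny = {1<..<Nx} \<times> {1<..<Ny}"

definition corners :: "nat \<Rightarrow> nat \<Rightarrow> (nat \<times> nat) set" where
  "corners Nx Ny = {(1,1), (1,Ny), (Nx,1), (Nx,Ny)}"

definition bdry :: "nat \<Rightarrow> nat \<Rightarrow> (nat \<times> nat) set" where
  "bdry Nx Ny = grid Nx Ny - interior Nx Ny - corners Nx Ny"

definition w2 :: "real \<Rightarrow> real \<Rightarrow> nat \<times> nat \<Rightarrow> nat \<times> nat \<Rightarrow> real" where
  "w2 dx dy p q = real (nat \<bar>int (fst p) - int (fst q)\<bar>) * dx\<^sup>2
                 + real (nat \<bar>int (snd p) - int (snd q)\<bar>) * dy\<^sup>2"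

definition w1 :: "real \<Rightarrow> real \<Rightarrow> nat \<times> nat \<Rightarrow> nat \<times> nat \<Rightarrow> real" where
  "w1 dx dy p q = real (nat \<bar>int (fst p) - int (fst q)\<bar>) * dx
                 + real (nat \<bar>int (snd p) - int (snd q)\<bar>) * dy"

definition Dmid :: "(real \<Rightarrow> real \<Rightarrow> real) \<Rightarrow> nat \<times> nat \<Rightarrow> nat \<times> nat \<Rightarrow> real" where
  "Dmid D p q = D ((real (fst p) + real (fst q)) / 2) ((real (snd p) + real (snd q)) / 2)"

definition Lgrid :: "nat \<Rightarrow> nat \<Rightarrow> real \<Rightarrow> real \<Rightarrow> real \<Rightarrow> (real \<Rightarrow> real \<Rightarrow> real)
    \<Rightarrow> (nat \<times> nat \<Rightarrow> real) \<Rightarrow> nat \<times> nat \<Rightarrow> nat \<times> nat \<Rightarrow> real" where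
  "Lgrid Nx Ny dx dy ell D \<sigma> p q =
    (if p \<in> interior Nx Ny then
       (if q = p then (\<Sum>t\<in>{t\<in>grid Nx Ny. nbr p t}. Dmid D p t / w2 dx dy p t) + \<sigma> p
        else if q \<in> grid Nx Ny \<and> nbr p q then - Dmid D p q / w2 dx dy p q
        else 0)
     else if p \<in> bdry Nx Ny then
       (if q = p then 1 + ell * (\<Sum>t\<in>{t\<in>interior Nx Ny. nbr p t}. Dmid D p t / w1 dx dy p t)
        else if q \<in> interior Nx Ny \<and> nbr p q then - ell * Dmid D p q / w1 dx dy p q
        else 0)
     else if p \<in> corners Nx Ny then
       (if q = p then 1 + sqrt 2 * ell / 2 * (\<Sum>t\<in>{t\<in>grid Nx Ny. nbr p t}. Dmid D p t / w1 dx dy p t)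
        else if q \<in> grid Nx Ny \<and> nbr p q then - (sqrt 2 * ell / 2) * Dmid D p q / w1 dx dy p q
        else 0)
     else 0)"

definition idx :: "nat \<Rightarrow> nat \<times> nat \<Rightarrow> nat" where
  "idx Ny p = (fst p - 1) * Ny + snd p"

definition gpt :: "nat \<Rightarrow> nat \<Rightarrow> nat \<times> nat" where
  "gpt Ny k = ((k - 1) div Ny + 1, (k - 1) mod Ny + 1)"

definition Lmat :: "nat \<Rightarrow> nat \<Rightarrow> real \<Rightarrow> real \<Rightarrow> real \<Rightarrow> (real \<Rightarrow> real \<Rightarrow> real)
    \<Rightarrow> (nat \<times> nat \<Rightarrow> real) \<Rightarrow> nat \<Rightarrow> nat \<Rightarrow> real" where
  "Lmat Nx Ny dx dy ell D \<sigma> k l = Lgrid Nx Ny dx dy ell D \<sigma> (gpt Ny k) (gpt Ny l)"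

end

theory Submission
  imports Defs
begin

text \<open>In every row p of L the off-diagonal entries are exactly the negatives of the
  coupling summands of the diagonal entry, so the dominance margin
  |L(p,p)| - (sum over q \<noteq> p of |L(p,q)|) equals \<sigma>(p) \<ge> 0 at interior points and 1 at
  boundary and corner points. Hence L is WDD and every non-interior row is SDD. An interior
  point couples with nonzero weight to each of its grid neighbours, so the walk
  (i,j), (i-1,j), ..., (1,j) runs through interior points and ends in the SDD row of the
  boundary point (1,j).\<close>

lemma idx_gpt: "1 \<le> k \<Longrightarrow> idx Ny (gpt Ny k) = k"
  unfolding gpt_def idx_def by simp

lemma gpt_idx:
  assumes "p \<in> grid Nx Ny"
  shows "gpt Ny (idx Ny p) = p"
proof -
  define a b where "a = fst p - 1" and "b = snd p - 1"
  have p: "p = (Suc a, Suc b)" and "b < Ny"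
    using assms by (auto simp: a_def b_def grid_def)
  from p have "idx Ny p - 1 = b + Ny * a" by (simp add: idx_def mult.commute)
  with \<open>b < Ny\<close> show ?thesis unfolding gpt_def p by simp
qed

lemma gpt_in_grid:
  assumes "k \<in> {1..Nx * Ny}"
  shows "gpt Ny k \<in> grid Nx Ny"
proof -
  have "Ny > 0" and "k - 1 < Nx * Ny"
    using assms by (auto intro: Nat.gr0I)
  then have "(k - 1) div Ny < Nx" and "(k - 1) mod Ny < Ny"
    by (simp_all add: div_less_iff_less_mult mult.commute)
  then show ?thesis by (simp add: gpt_def grid_def)
qed

lemma idx_in_range:
  assumes "p \<in> grid Nx Ny"
  shows "idx Ny p \<in> {1..Nx * Ny}"
proof -
  have "(fst p - 1) * Ny + snd p \<le> (Nx - 1) * Ny + Ny"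
    using assms by (intro add_mono mult_le_mono1) (auto simp: grid_def)
  also have "\<dots> = Nx * Ny"
    using assms by (cases Nx) (auto simp: grid_def)
  finally show ?thesis using assms by (auto simp: idx_def grid_def)
qed

lemma bij_betw_gpt: "bij_betw (gpt Ny) {1..Nx * Ny} (grid Nx Ny)"
proof (rule bij_betw_byWitness[where f' = "idx Ny"])
  show "\<forall>k\<in>{1..Nx * Ny}. idx Ny (gpt Ny k) = k" by (simp add: idx_gpt)
  show "\<forall>p\<in>grid Nx Ny. gpt Ny (idx Ny p) = p" by (simp add: gpt_idx)
  show "gpt Ny ` {1..Nx * Ny} \<subseteq> grid Nx Ny" using gpt_in_grid by blast
  show "idx Ny ` grid Nx Ny \<subseteq> {1..Nx * Ny}" using idx_in_range by blast
qed

lemma offdiag_abs_sum_reindex: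
  assumes "bij_betw f S T" and "k \<in> S"
  shows "(\<Sum>l\<in>S - {k}. \<bar>B (f k) (f l)\<bar>) = (\<Sum>q\<in>T - {f k}. \<bar>B (f k) q\<bar>)"
proof -
  have "bij_betw f (S - {k}) (T - {f k})"
    using assms by (intro bij_betw_DiffI) (auto dest: bij_betwE)
  then show ?thesis by (rule sum.reindex_bij_betw)
qed

lemma diagonal_dominance_margin:
  fixes B :: "'a \<Rightarrow> 'a \<Rightarrow> real"
  assumes "finite T" and "N \<subseteq> T - {p}" and "c \<ge> 0" and "d \<ge> 0"
    and "\<And>q. q \<in> N \<Longrightarrow> a q \<ge> 0"
    and "B p p = d + c * (\<Sum>q\<in>N. a q)"
    and "\<And>q. q \<in> N \<Longrightarrow> B p q = - (c * a q)"
    and "\<And>q. q \<in> T - {p} - N \<Longrightarrow> B p q = 0"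
  shows "\<bar>B p p\<bar> - (\<Sum>q\<in>T - {p}. \<bar>B p q\<bar>) = d"
proof -
  have "(\<Sum>q\<in>T - {p}. \<bar>B p q\<bar>) = (\<Sum>q\<in>N. \<bar>B p q\<bar>)"
    using assms(1,2,8) by (intro sum.mono_neutral_right) auto
  also have "\<dots> = c * (\<Sum>q\<in>N. a q)"
    using assms(3,5,7) by (simp add: sum_distrib_left)
  finally show ?thesis
    using assms(3-6) by (simp add: sum_nonneg)
qed

lemma nbr_neq: "nbr p q \<Longrightarrow> q \<noteq> p"
  by (auto simp: nbr_def)

lemma w1_pos: "dx > 0 \<Longrightarrow> dy > 0 \<Longrightarrow> nbr p q \<Longrightarrow> w1 dx dy p q > 0"
  unfolding nbr_def w1_def by (cases "fst p = fst q") auto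

lemma w2_pos: "dx > 0 \<Longrightarrow> dy > 0 \<Longrightarrow> nbr p q \<Longrightarrow> w2 dx dy p q > 0"
  unfolding nbr_def w2_def by (cases "fst p = fst q") auto

lemma interior_subset_grid: "interior Nx Ny \<subseteq> grid Nx Ny"
  by (auto simp: interior_def grid_def)

lemma Lgrid_row_margin:
  fixes Nx Ny :: nat and dx dy ell :: real and D :: "real \<Rightarrow> real \<Rightarrow> real"
    and \<sigma> :: "nat \<times> nat \<Rightarrow> real" and p :: "nat \<times> nat"
  defines "G \<equiv> Lgrid Nx Ny dx dy ell D \<sigma>"
  assumes "dx > 0" and "dy > 0" and "ell > 0"
    and Dpos: "\<And>q. q \<in> grid Nx Ny \<Longrightarrow> nbr p q \<Longrightarrow> Dmid D p q > 0"
    and p: "p \<in> grid Nx Ny" and \<sigma>: "p \<in> interior Nx Ny \<Longrightarrow> \<sigma> p \<ge> 0"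
  shows "\<bar>G p p\<bar> - (\<Sum>q\<in>grid Nx Ny - {p}. \<bar>G p q\<bar>)
    = (if p \<in> interior Nx Ny then \<sigma> p else 1)"
proof -
  have fin: "finite (grid Nx Ny)" by (simp add: grid_def)
  have w1: "\<And>q. nbr p q \<Longrightarrow> w1 dx dy p q > 0"
    and w2: "\<And>q. nbr p q \<Longrightarrow> w2 dx dy p q > 0"
    using assms(2,3) by (simp_all add: w1_pos w2_pos)
  consider "p \<in> interior Nx Ny" | "p \<in> bdry Nx Ny"
    | "p \<in> corners Nx Ny" "p \<notin> interior Nx Ny" "p \<notin> bdry Nx Ny"
    using p by (auto simp: bdry_def)
  then show ?thesis
  proof cases
    case 1
    have "\<bar>G p p\<bar> - (\<Sum>q\<in>grid Nx Ny - {p}. \<bar>G p q\<bar>) = \<sigma> p"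
    proof (rule diagonal_dominance_margin[where N = "{t\<in>grid Nx Ny. nbr p t}" and c = 1
          and a = "\<lambda>q. Dmid D p q / w2 dx dy p q"])
      show "\<And>q. q \<in> {t\<in>grid Nx Ny. nbr p t} \<Longrightarrow> 0 \<le> Dmid D p q / w2 dx dy p q"
        using Dpos w2 by (simp add: less_imp_le)
    qed (use fin 1 \<sigma> nbr_neq in \<open>auto simp: G_def Lgrid_def\<close>)
    with 1 show ?thesis by simp
  next
    case 2
    have "\<bar>G p p\<bar> - (\<Sum>q\<in>grid Nx Ny - {p}. \<bar>G p q\<bar>) = 1"
    proof (rule diagonal_dominance_margin[where N = "{t\<in>interior Nx Ny. nbr p t}" and c = ell
          and a = "\<lambda>q. Dmid D p q / w1 dx dy p q"])
      show "\<And>q. q \<in> {t\<in>interior Nx Ny. nbr p t} \<Longrightarrow> 0 \<le> Dmid D p q / w1 dx dy p q"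
        using Dpos w1 interior_subset_grid by (force simp: less_imp_le)
    qed (use fin 2 assms(4) nbr_neq interior_subset_grid[of Nx Ny] in
        \<open>auto simp: G_def Lgrid_def bdry_def\<close>)
    with 2 show ?thesis by (simp add: bdry_def)
  next
    case 3
    have "\<bar>G p p\<bar> - (\<Sum>q\<in>grid Nx Ny - {p}. \<bar>G p q\<bar>) = 1"
    proof (rule diagonal_dominance_margin[where N = "{t\<in>grid Nx Ny. nbr p t}"
          and c = "sqrt 2 * ell / 2" and a = "\<lambda>q. Dmid D p q / w1 dx dy p q"])
      show "\<And>q. q \<in> {t\<in>grid Nx Ny. nbr p t} \<Longrightarrow> 0 \<le> Dmid D p q / w1 dx dy p q"
        using Dpos w1 by (simp add: less_imp_le)
    qed (use fin 3 assms(4) nbr_neq in \<open>auto simp: G_def Lgrid_def\<close>)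
    with 3 show ?thesis by simp
  qed
qed

lemma Lmat_row_margin:
  fixes Nx Ny :: nat and dx dy ell :: real and D :: "real \<Rightarrow> real \<Rightarrow> real"
    and \<sigma> :: "nat \<times> nat \<Rightarrow> real"
  defines "L \<equiv> Lmat Nx Ny dx dy ell D \<sigma>"
  assumes "dx > 0" and "dy > 0" and "ell > 0"
    and "\<And>p q. p \<in> grid Nx Ny \<Longrightarrow> q \<in> grid Nx Ny \<Longrightarrow> nbr p q \<Longrightarrow> Dmid D p q > 0"
    and "\<And>p. p \<in> grid Nx Ny \<Longrightarrow> \<sigma> p \<ge> 0"
    and k: "k \<in> {1..Nx * Ny}"
  shows "\<bar>L k k\<bar> - (\<Sum>l\<in>{1..Nx * Ny} - {k}. \<bar>L k l\<bar>)
    = (if gpt Ny k \<in> interior Nx Ny then \<sigma> (gpt Ny k) else 1)"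
proof -
  have "(\<Sum>l\<in>{1..Nx * Ny} - {k}. \<bar>L k l\<bar>)
      = (\<Sum>q\<in>grid Nx Ny - {gpt Ny k}. \<bar>Lgrid Nx Ny dx dy ell D \<sigma> (gpt Ny k) q\<bar>)"
    unfolding L_def Lmat_def by (rule offdiag_abs_sum_reindex[OF bij_betw_gpt k])
  then show ?thesis
    using Lgrid_row_margin[of dx dy ell Nx Ny "gpt Ny k" D \<sigma>] gpt_in_grid[OF k] assms(2-6)
    by (simp add: L_def Lmat_def)
qed

lemma Lgrid_interior_nbr_neq_0:
  assumes "dx > 0" and "dy > 0" and "p \<in> interior Nx Ny" and "q \<in> grid Nx Ny" and "nbr p q"
    and "Dmid D p q > 0"
  shows "Lgrid Nx Ny dx dy ell D \<sigma> p q \<noteq> 0"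
  using assms w2_pos[of dx dy p q] nbr_neq[of p q] by (simp add: Lgrid_def)

lemma Lmat_walk_to_left_edge:
  fixes Nx Ny :: nat and dx dy ell :: real and D :: "real \<Rightarrow> real \<Rightarrow> real"
    and \<sigma> :: "nat \<times> nat \<Rightarrow> real"
  assumes "dx > 0" and "dy > 0"
    and Dpos: "\<And>p q. p \<in> grid Nx Ny \<Longrightarrow> q \<in> grid Nx Ny \<Longrightarrow> nbr p q \<Longrightarrow> Dmid D p q > 0"
    and ij: "(i, j) \<in> interior Nx Ny"
  obtains ps where "length ps \<ge> 2" and "hd ps = idx Ny (i, j)" and "last ps = idx Ny (1, j)"
    and "set ps \<subseteq> {1..Nx * Ny}"
    and "\<forall>m. m + 1 < length ps \<longrightarrow> Lmat Nx Ny dx dy ell D \<sigma> (ps ! m) (ps ! (m + 1)) \<noteq> 0"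
proof
  define ps where "ps = map (\<lambda>m. idx Ny (i - m, j)) [0..<i]"
  have bounds: "1 < i" "i < Nx" "1 < j" "j < Ny"
    using ij by (auto simp: interior_def)
  have col: "(a, j) \<in> grid Nx Ny" if "1 \<le> a" "a \<le> i" for a
    using that bounds by (simp add: grid_def)
  have nth: "ps ! m = idx Ny (i - m, j)" if "m < i" for m
    using that by (simp add: ps_def)
  show "length ps \<ge> 2"
    using bounds by (simp add: ps_def)
  show "hd ps = idx Ny (i, j)"
    using bounds by (simp add: ps_def hd_map)
  show "last ps = idx Ny (1, j)"
    using bounds by (simp add: ps_def last_map)
  show "set ps \<subseteq> {1..Nx * Ny}"
  proof
    fix x assume "x \<in> set ps"
    then obtain m where "m < i" and x: "x = idx Ny (i - m, j)" by (auto simp: ps_def)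
    then have "(i - m, j) \<in> grid Nx Ny" by (intro col) auto
    then show "x \<in> {1..Nx * Ny}" unfolding x by (rule idx_in_range)
  qed
  show "\<forall>m. m + 1 < length ps \<longrightarrow> Lmat Nx Ny dx dy ell D \<sigma> (ps ! m) (ps ! (m + 1)) \<noteq> 0"
  proof (intro allI impI)
    fix m assume "m + 1 < length ps"
    then have m: "m + 1 < i" by (simp add: ps_def)
    let ?p = "(i - m, j)" and ?q = "(i - m - 1, j)"
    have p: "?p \<in> interior Nx Ny" and q: "?q \<in> grid Nx Ny" and "nbr ?p ?q"
      using m bounds by (auto simp: interior_def grid_def nbr_def)
    moreover have "Dmid D ?p ?q > 0"
      using Dpos interior_subset_grid p q \<open>nbr ?p ?q\<close> by blast
    ultimately have "Lgrid Nx Ny dx dy ell D \<sigma> ?p ?q \<noteq> 0"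
      by (rule Lgrid_interior_nbr_neq_0[OF assms(1,2)])
    moreover have "gpt Ny (ps ! m) = ?p"
      using m nth[of m] gpt_idx[OF col[of "i - m"]] by simp
    moreover have "gpt Ny (ps ! (m + 1)) = ?q"
      using m nth[of "m + 1"] gpt_idx[OF q] by (simp add: diff_diff_add)
    ultimately show "Lmat Nx Ny dx dy ell D \<sigma> (ps ! m) (ps ! (m + 1)) \<noteq> 0"
      by (simp add: Lmat_def)
  qed
qed

lemma Lmat_row_SDD_off_interior:
  assumes "dx > 0" and "dy > 0" and "ell > 0"
    and "\<And>p q. p \<in> grid Nx Ny \<Longrightarrow> q \<in> grid Nx Ny \<Longrightarrow> nbr p q \<Longrightarrow> Dmid D p q > 0"
    and "\<And>p. p \<in> grid Nx Ny \<Longrightarrow> \<sigma> p \<ge> 0"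
    and "k \<in> {1..Nx * Ny}" and "gpt Ny k \<notin> interior Nx Ny"
  shows "row_SDD (Lmat Nx Ny dx dy ell D \<sigma>) {1..Nx * Ny} k"
proof -
  have "\<bar>Lmat Nx Ny dx dy ell D \<sigma> k k\<bar>
      - (\<Sum>l\<in>{1..Nx * Ny} - {k}. \<bar>Lmat Nx Ny dx dy ell D \<sigma> k l\<bar>) = 1"
    using Lmat_row_margin[of dx dy ell Nx Ny D \<sigma> k] assms by simp
  then show ?thesis by (simp add: row_SDD_def)
qed

lemma WDD_Lmat:
  assumes "dx > 0" and "dy > 0" and "ell > 0"
    and "\<And>p q. p \<in> grid Nx Ny \<Longrightarrow> q \<in> grid Nx Ny \<Longrightarrow> nbr p q \<Longrightarrow> Dmid D p q > 0"
    and \<sigma>: "\<And>p. p \<in> grid Nx Ny \<Longrightarrow> \<sigma> p \<ge> 0"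
  shows "WDD (Lmat Nx Ny dx dy ell D \<sigma>) {1..Nx * Ny}"
  unfolding WDD_def row_WDD_def
proof
  fix k assume k: "k \<in> {1..Nx * Ny}"
  have "0 \<le> (if gpt Ny k \<in> interior Nx Ny then \<sigma> (gpt Ny k) else 1)"
    using \<sigma>[OF gpt_in_grid[OF k]] by simp
  moreover have "\<bar>Lmat Nx Ny dx dy ell D \<sigma> k k\<bar>
      - (\<Sum>l\<in>{1..Nx * Ny} - {k}. \<bar>Lmat Nx Ny dx dy ell D \<sigma> k l\<bar>)
      = (if gpt Ny k \<in> interior Nx Ny then \<sigma> (gpt Ny k) else 1)"
    using assms k by (rule Lmat_row_margin)
  ultimately show "(\<Sum>l\<in>{1..Nx * Ny} - {k}. \<bar>Lmat Nx Ny dx dy ell D \<sigma> k l\<bar>) \<le> \<bar>Lmat Nx Ny dx dy ell D \<sigma> k k\<bar>"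
    by linarith
qed

theorem proposition5p2:
  fixes Nx Ny :: nat and dx dy ell :: real
    and D :: "real \<Rightarrow> real \<Rightarrow> real" and \<sigma> :: "nat \<times> nat \<Rightarrow> real"
  assumes "Nx \<ge> 3" and "Ny \<ge> 3" and "dx > 0" and "dy > 0" and "ell > 0"
    and "\<And>p q. p \<in> grid Nx Ny \<Longrightarrow> q \<in> grid Nx Ny \<Longrightarrow> nbr p q \<Longrightarrow> Dmid D p q > 0"
    and "\<And>p. p \<in> grid Nx Ny \<Longrightarrow> \<sigma> p \<ge> 0"
  shows "WCDD (Lmat Nx Ny dx dy ell D \<sigma>) {1..Nx * Ny}"
proof -
  let ?S = "{1..Nx * Ny}" and ?L = "Lmat Nx Ny dx dy ell D \<sigma>"
  have "WDD ?L ?S"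
    using assms(3-7) by (rule WDD_Lmat)
  moreover have "\<exists>ps. length ps \<ge> 2 \<and> hd ps = k \<and> set ps \<subseteq> ?S \<and>
      (\<forall>m. m + 1 < length ps \<longrightarrow> ?L (ps ! m) (ps ! (m + 1)) \<noteq> 0) \<and> row_SDD ?L ?S (last ps)"
    if k: "k \<in> ?S" and "\<not> row_SDD ?L ?S k" for k
  proof -
    obtain i j where ij: "gpt Ny k = (i, j)" by fastforce
    with that have ij_interior: "(i, j) \<in> interior Nx Ny"
      using Lmat_row_SDD_off_interior[OF assms(3-7)] by fastforce
    obtain ps where ps: "length ps \<ge> 2" "hd ps = idx Ny (i, j)" "last ps = idx Ny (1, j)"
        "set ps \<subseteq> ?S" "\<forall>m. m + 1 < length ps \<longrightarrow> ?L (ps ! m) (ps ! (m + 1)) \<noteq> 0"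
      using assms(3,4,6) ij_interior by (rule Lmat_walk_to_left_edge)
    have "idx Ny (i, j) = k"
      using k idx_gpt[of k Ny] by (simp add: ij)
    moreover from ij_interior have "(1, j) \<in> grid Nx Ny"
      by (auto simp: interior_def grid_def)
    then have "row_SDD ?L ?S (idx Ny (1, j))"
      by (intro Lmat_row_SDD_off_interior[OF assms(3-7)] idx_in_range)
        (simp_all add: gpt_idx interior_def)
    ultimately show ?thesis
      using ps by auto
  qed
  ultimately show ?thesis by (simp add: WCDD_def)
qed

end
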